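(* For any two subsets $I,J\subseteq\{1,\dots,n\}$, $F_I=F_J$ if and only if $\overline I^0=\overline J^0$ (equivalently $\Pi_{\overline I^0}=\Pi_{\overline J^0}$).
   Context: Let $\mathfrak g$ be a finite-dimensional complex simple Lie algebra with root system $\Phi$, base $\Pi=\{\alpha_1,\dots,\alpha_n\}$, Weyl group $W$; $E$ is the real span of $\Pi$ with $W$-invariant inner product $(\cdot,\cdot)$. Fix a dominant integral weight $\lambda=\sum_i m_i\alpha_i$. For $x\in E$, $c_i(x)$ is the coefficient of $\alpha_i$ in $x$. Weight polytope $\mathbf P=\mathrm{conv}(W\lambda)$, and $F_I=\{x\in\mathbf P\mid c_i(x)=m_i\ \forall i\in I\}$ for $I\subseteq\{1,\dots,n\}$. The extended Dynkin diagram is the Dynkin diagram of $\Pi$ plus a node $\{-\lambda\}$ joined to $\alpha_i$ iff $(\lambda,\alpha_i)>0$. For $I\subseteq\{1,\dots,n\}$ with complement $\overline I$, $\overline I^0$ is the set of indices $j$ such that $\alpha_j$ lies in the connected component containing $\{-\lambda\}$ of the induced subdiagram on $\{\alpha_j\mid j\in\overline I\}\cup\{-\lambda\}$; $\Pi_{\overline I^0}=\{\alpha_j\mid j\in\overline I^0\}$. *)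

theory Defs
  imports "HOL-Analysis.Analysis"
begin

text \<open>Simple roots are indexed by 1..n, alpha :: nat => 'a, with 'a a Euclidean space E.\<close>

definition cartan_int :: "(nat \<Rightarrow> 'a::euclidean_space) \<Rightarrow> nat \<Rightarrow> nat \<Rightarrow> real" where
  "cartan_int \<alpha> i j = 2 * (\<alpha> i \<bullet> \<alpha> j) / (\<alpha> j \<bullet> \<alpha> j)"

definition dynkin_adj :: "(nat \<Rightarrow> 'a::euclidean_space) \<Rightarrow> nat \<Rightarrow> nat \<Rightarrow> bool" where
  "dynkin_adj \<alpha> i j \<longleftrightarrow> i \<noteq> j \<and> \<alpha> i \<bullet> \<alpha> j \<noteq> 0"

text \<open>Base of an irreducible (reduced, crystallographic) root system, i.e. of the root
  system of a finite-dimensional complex simple Lie algebra, spanning E.\<close>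
definition simple_system :: "(nat \<Rightarrow> 'a::euclidean_space) \<Rightarrow> nat \<Rightarrow> bool" where
  "simple_system \<alpha> n \<longleftrightarrow>
     n \<ge> 1 \<and> inj_on \<alpha> {1..n} \<and> independent (\<alpha> ` {1..n}) \<and> span (\<alpha> ` {1..n}) = UNIV \<and>
     (\<forall>i\<in>{1..n}. \<forall>j\<in>{1..n}. i \<noteq> j \<longrightarrow> \<alpha> i \<bullet> \<alpha> j \<le> 0 \<and> cartan_int \<alpha> i j \<in> \<int>) \<and>
     (\<forall>S. S \<subseteq> {1..n} \<and> S \<noteq> {} \<and> S \<noteq> {1..n} \<longrightarrow>
        (\<exists>i\<in>S. \<exists>j\<in>{1..n} - S. dynkin_adj \<alpha> i j))"

definition reflection :: "'a::euclidean_space \<Rightarrow> 'a \<Rightarrow> 'a" where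
  "reflection v x = x - (2 * (x \<bullet> v) / (v \<bullet> v)) *\<^sub>R v"

inductive_set weyl_group :: "(nat \<Rightarrow> 'a::euclidean_space) \<Rightarrow> nat \<Rightarrow> ('a \<Rightarrow> 'a) set"
  for \<alpha> n where
  id: "id \<in> weyl_group \<alpha> n"
| refl: "w \<in> weyl_group \<alpha> n \<Longrightarrow> i \<in> {1..n} \<Longrightarrow> reflection (\<alpha> i) \<circ> w \<in> weyl_group \<alpha> n"

definition dominant_integral :: "(nat \<Rightarrow> 'a::euclidean_space) \<Rightarrow> nat \<Rightarrow> 'a \<Rightarrow> bool" where
  "dominant_integral \<alpha> n lam \<longleftrightarrow> (\<forall>i\<in>{1..n}. 2 * (lam \<bullet> \<alpha> i) / (\<alpha> i \<bullet> \<alpha> i) \<in> \<nat>)"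

definition root_coeff :: "(nat \<Rightarrow> 'a::euclidean_space) \<Rightarrow> nat \<Rightarrow> nat \<Rightarrow> 'a \<Rightarrow> real" where
  "root_coeff \<alpha> n i x =
     (THE c. (\<forall>j. j \<notin> {1..n} \<longrightarrow> c j = 0) \<and> x = (\<Sum>j=1..n. c j *\<^sub>R \<alpha> j)) i"

definition weight_polytope :: "(nat \<Rightarrow> 'a::euclidean_space) \<Rightarrow> nat \<Rightarrow> 'a \<Rightarrow> 'a set" where
  "weight_polytope \<alpha> n lam = convex hull {w lam | w. w \<in> weyl_group \<alpha> n}"

definition weight_face :: "(nat \<Rightarrow> 'a::euclidean_space) \<Rightarrow> nat \<Rightarrow> 'a \<Rightarrow> nat set \<Rightarrow> 'a set" where
  "weight_face \<alpha> n lam I =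
     {x \<in> weight_polytope \<alpha> n lam. \<forall>i\<in>I. root_coeff \<alpha> n i x = root_coeff \<alpha> n i lam}"

text \<open>Indices j in S whose node alpha_j lies in the connected component of the node -lambda
  in the subgraph of the extended Dynkin diagram induced on {alpha_j | j in S} plus {-lambda}.\<close>
inductive_set lam_component :: "(nat \<Rightarrow> 'a::euclidean_space) \<Rightarrow> 'a \<Rightarrow> nat set \<Rightarrow> nat set"
  for \<alpha> lam S where
  base: "j \<in> S \<Longrightarrow> lam \<bullet> \<alpha> j > 0 \<Longrightarrow> j \<in> lam_component \<alpha> lam S"
| step: "i \<in> lam_component \<alpha> lam S \<Longrightarrow> j \<in> S \<Longrightarrow> dynkin_adj \<alpha> i j \<Longrightarrow> j \<in> lam_component \<alpha> lam S"

text \<open>The set \<open>\<overline>I\<^sup>0\<close>, with complement taken in {1..n}.\<close>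
definition compl0 :: "(nat \<Rightarrow> 'a::euclidean_space) \<Rightarrow> nat \<Rightarrow> 'a \<Rightarrow> nat set \<Rightarrow> nat set" where
  "compl0 \<alpha> n lam I = lam_component \<alpha> lam ({1..n} - I)"

end

theory Submission
  imports Defs
begin

text \<open>Write \<open>c\<^sub>j\<close> for the coordinates with respect to the simple roots. For dominant
  \<open>\<lambda>\<close> every \<open>\<lambda> - w\<lambda>\<close> has nonnegative coordinates (the reduced-word argument, with the
  fact that every root is positive or negative derived from integrality), so
  \<open>c\<^sub>j \<le> c\<^sub>j(\<lambda>)\<close> on \<open>P\<close>. The theorem follows once \<open>\<overline>I\<^sup>0\<close> is shown to be the set of
  \<open>j\<close> for which \<open>c\<^sub>j\<close> is not constant on \<open>F\<^sub>I\<close>.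

  Along the component of \<open>-\<lambda>\<close>, reflections produce points of \<open>F\<^sub>I\<close> with \<open>c\<^sub>j < c\<^sub>j(\<lambda>)\<close>:
  \<open>s\<^sub>j\<close> preserves \<open>F\<^sub>I\<close> for \<open>j \<notin> I\<close>, and it lowers \<open>c\<^sub>j\<close> at any \<open>x\<close> with \<open>\<langle>x, \<alpha>\<^sub>j\<rangle> > 0\<close>,
  which holds at \<open>\<lambda>\<close> if \<open>j\<close> is joined to \<open>-\<lambda>\<close>, and at a point already lowered at a
  neighbour of \<open>j\<close> because simple roots are obtuse. Conversely, a vertex \<open>w\<lambda> \<noteq> \<lambda>\<close> of
  \<open>F\<^sub>I\<close> has \<open>\<langle>w\<lambda>, \<alpha>\<^sub>i\<rangle> < 0\<close> for some \<open>i\<close>, and \<open>s\<^sub>i w\<lambda>\<close> is a vertex of \<open>F\<^sub>I\<close> of smaller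
  height differing from \<open>w\<lambda>\<close> only in \<open>c\<^sub>i\<close>. By induction on the height, \<open>i\<close> lies in the
  component, so every vertex of \<open>F\<^sub>I\<close>, and hence every point, agrees with \<open>\<lambda>\<close> outside
  \<open>\<overline>I\<^sup>0\<close>.\<close>

definition coroot_pairing :: "'a::euclidean_space \<Rightarrow> 'a \<Rightarrow> real" where
  "coroot_pairing v x = 2 * (x \<bullet> v) / (v \<bullet> v)"

lemma reflection_eq: "reflection v x = x - coroot_pairing v x *\<^sub>R v"
  by (simp add: reflection_def coroot_pairing_def)

lemma linear_coroot_pairing: "linear (coroot_pairing v)"
  by (rule linearI) (simp_all add: coroot_pairing_def inner_add_left add_divide_distrib)

lemma linear_reflection: "linear (reflection v)"
  by (rule linearI)
    (simp_all add: reflection_def algebra_simps inner_add_left scaleR_diff_right add_divide_distrib)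

lemma reflection_inner: "v \<noteq> 0 \<Longrightarrow> reflection v x \<bullet> reflection v y = x \<bullet> y"
  by (simp add: reflection_def inner_diff_left inner_diff_right algebra_simps power2_eq_square
      inner_commute)

lemma reflection_reflection: "v \<noteq> 0 \<Longrightarrow> reflection v (reflection v x) = x"
  by (simp add: reflection_def inner_diff_left algebra_simps)

lemma coroot_pairing_reflection_self:
  "v \<noteq> 0 \<Longrightarrow> coroot_pairing v (reflection v x) = - coroot_pairing v x"
  by (simp add: reflection_def coroot_pairing_def inner_diff_left field_simps)

lemma reflection_conjugate:
  assumes "linear w" "\<And>x y. w x \<bullet> w y = x \<bullet> y"
  shows "w (reflection v x) = reflection (w v) (w x)"
  using assms by (simp add: reflection_def linear_diff linear_cmul)

fun reflect_word :: "(nat \<Rightarrow> 'a::euclidean_space) \<Rightarrow> nat list \<Rightarrow> 'a \<Rightarrow> 'a" where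
  "reflect_word \<alpha> [] = id"
| "reflect_word \<alpha> (i # ws) = reflection (\<alpha> i) \<circ> reflect_word \<alpha> ws"

lemma reflect_word_append: "reflect_word \<alpha> (xs @ ys) = reflect_word \<alpha> xs \<circ> reflect_word \<alpha> ys"
  by (induction xs) auto

lemma linear_reflect_word: "linear (reflect_word \<alpha> ws)"
proof (induction ws)
  case Nil
  show ?case using linear_id by (simp add: id_def)
next
  case (Cons i ws)
  show ?case using linear_compose[OF Cons.IH linear_reflection] by (simp add: o_def)
qed

lemma sum_sum_symmetric:
  fixes g :: "nat \<Rightarrow> nat \<Rightarrow> real"
  assumes "finite S" "\<And>l m. g l m = g m l"
  shows "(\<Sum>l\<in>S. \<Sum>m\<in>S. g l m) = (\<Sum>l\<in>S. g l l) + 2 * (\<Sum>l\<in>S. \<Sum>m\<in>{m\<in>S. m < l}. g l m)"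
proof -
  have row: "(\<Sum>m\<in>S. g l m) = g l l + (\<Sum>m\<in>{m\<in>S. m < l}. g l m) + (\<Sum>m\<in>{m\<in>S. l < m}. g l m)"
    if "l \<in> S" for l
  proof -
    have "(\<Sum>m\<in>S. g l m) = (\<Sum>m\<in>insert l ({m\<in>S. m < l} \<union> {m\<in>S. l < m}). g l m)"
      using that by (intro sum.cong) auto
    also have "\<dots> = g l l + (\<Sum>m\<in>{m\<in>S. m < l}. g l m) + (\<Sum>m\<in>{m\<in>S. l < m}. g l m)"
      using assms(1) by (subst sum.insert) (auto intro: sum.union_disjoint)
    finally show ?thesis .
  qed
  have "(\<Sum>l\<in>S. \<Sum>m\<in>{m\<in>S. l < m}. g l m) = (\<Sum>m\<in>S. \<Sum>l\<in>{l\<in>S. l < m}. g l m)"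
    using sum.swap_restrict[OF assms(1) assms(1), of g "\<lambda>l m. l < m"] by simp
  also have "\<dots> = (\<Sum>l\<in>S. \<Sum>m\<in>{m\<in>S. m < l}. g l m)"
    using assms(2) by simp
  finally show ?thesis
    by (simp add: row sum.distrib)
qed

lemma convex_combination_eq_max:
  fixes f :: "'a \<Rightarrow> real"
  assumes "finite S" "\<And>y. y \<in> S \<Longrightarrow> 0 \<le> u y" "sum u S = 1" "\<And>y. y \<in> S \<Longrightarrow> f y \<le> M"
    and "(\<Sum>y\<in>S. u y * f y) = M" "y \<in> S" "u y \<noteq> 0"
  shows "f y = M"
proof -
  have "(\<Sum>z\<in>S. u z * (M - f z)) = M * sum u S - (\<Sum>z\<in>S. u z * f z)"
    by (simp add: algebra_simps sum_subtractf sum_distrib_left sum_distrib_right)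
  also have "\<dots> = 0"
    using assms(3,5) by simp
  finally have "\<forall>z\<in>S. u z * (M - f z) = 0"
    using sum_nonneg_eq_0_iff[OF assms(1), of "\<lambda>z. u z * (M - f z)"] assms(2,4) by simp
  hence "u y * (M - f y) = 0"
    using assms(6) by blast
  with assms(7) show ?thesis by simp
qed

section \<open>Coordinates with respect to the simple roots\<close>

text \<open>Keeps the simplifier from rewriting \<open>{1..n}\<close> to \<open>{Suc 0..n}\<close>.\<close>
declare One_nat_def [simp del]

locale simple_roots =
  fixes \<alpha> :: "nat \<Rightarrow> 'a::euclidean_space" and n :: nat
  assumes simple_system: "simple_system \<alpha> n"
begin

abbreviation coeff :: "nat \<Rightarrow> 'a \<Rightarrow> real" where
  "coeff \<equiv> root_coeff \<alpha> n"

lemma inj_on_alpha: "inj_on \<alpha> {1..n}"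
  using simple_system by (simp add: simple_system_def)

lemma independent_alpha: "independent (\<alpha> ` {1..n})"
  using simple_system by (simp add: simple_system_def)

lemma span_alpha: "span (\<alpha> ` {1..n}) = UNIV"
  using simple_system by (simp add: simple_system_def)

lemma alpha_inner_nonpos: "i \<in> {1..n} \<Longrightarrow> j \<in> {1..n} \<Longrightarrow> i \<noteq> j \<Longrightarrow> \<alpha> i \<bullet> \<alpha> j \<le> 0"
  using simple_system by (simp add: simple_system_def)

lemma alpha_nonzero: "i \<in> {1..n} \<Longrightarrow> \<alpha> i \<noteq> 0"
  using independent_alpha dependent_zero[of "\<alpha> ` {1..n}"] by (metis imageI)

lemma alpha_inner_self_pos: "i \<in> {1..n} \<Longrightarrow> \<alpha> i \<bullet> \<alpha> i > 0"
  using alpha_nonzero by simp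

lemma coroot_pairing_alpha_Ints:
  assumes "i \<in> {1..n}" "l \<in> {1..n}"
  shows "coroot_pairing (\<alpha> i) (\<alpha> l) \<in> \<int>"
proof (cases "l = i")
  case True
  thus ?thesis using alpha_inner_self_pos[OF assms(1)] by (simp add: coroot_pairing_def)
next
  case False
  thus ?thesis using simple_system assms
    by (simp add: simple_system_def coroot_pairing_def cartan_int_def)
qed

lemma sum_alpha_eq_0:
  assumes "(\<Sum>j\<in>{1..n}. c j *\<^sub>R \<alpha> j) = 0" "i \<in> {1..n}"
  shows "c i = 0"
proof -
  define u where "u v = c (the_inv_into {1..n} \<alpha> v)" for v
  have "(\<Sum>v\<in>\<alpha> ` {1..n}. u v *\<^sub>R v) = (\<Sum>j\<in>{1..n}. u (\<alpha> j) *\<^sub>R \<alpha> j)"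
    by (simp add: sum.reindex[OF inj_on_alpha])
  also have "\<dots> = (\<Sum>j\<in>{1..n}. c j *\<^sub>R \<alpha> j)"
    by (rule sum.cong) (simp_all add: u_def the_inv_into_f_f[OF inj_on_alpha])
  finally have "(\<Sum>v\<in>\<alpha> ` {1..n}. u v *\<^sub>R v) = 0"
    using assms(1) by simp
  hence "u (\<alpha> i) = 0"
    by (rule independent_alpha[unfolded independent_explicit_finite_subsets, rule_format,
        OF subset_refl finite_imageI[OF finite_atLeastAtMost] _ imageI[OF assms(2)]])
  thus ?thesis
    using the_inv_into_f_f[OF inj_on_alpha assms(2)] by (simp add: u_def)
qed

lemma coeff_char: "(\<forall>j. j \<notin> {1..n} \<longrightarrow> coeff j x = 0) \<and> x = (\<Sum>j\<in>{1..n}. coeff j x *\<^sub>R \<alpha> j)"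
proof -
  let ?P = "\<lambda>c. (\<forall>j. j \<notin> {1..n} \<longrightarrow> c j = 0) \<and> x = (\<Sum>j\<in>{1..n}. c j *\<^sub>R \<alpha> j)"
  have "x \<in> span (\<alpha> ` {1..n})"
    using span_alpha by simp
  then obtain u where "x = (\<Sum>v\<in>\<alpha> ` {1..n}. u v *\<^sub>R v)"
    using span_finite[of "\<alpha> ` {1..n}"] by auto
  define c where "c j = (if j \<in> {1..n} then u (\<alpha> j) else 0)" for j
  have "x = (\<Sum>j\<in>{1..n}. c j *\<^sub>R \<alpha> j)"
    by (simp add: \<open>x = _\<close> c_def sum.reindex[OF inj_on_alpha])
  hence "?P c"
    by (simp add: c_def)
  moreover have "d = c" if "?P d" for d
  proof
    fix j
    have "(\<Sum>l\<in>{1..n}. (d l - c l) *\<^sub>R \<alpha> l) = 0"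
      using that \<open>?P c\<close> by (simp add: scaleR_diff_left sum_subtractf)
    thus "d j = c j"
      using that \<open>?P c\<close> sum_alpha_eq_0[of "\<lambda>l. d l - c l" j] by (cases "j \<in> {1..n}") auto
  qed
  ultimately have "?P (THE c. ?P c)"
    by (rule theI)
  thus ?thesis unfolding root_coeff_def .
qed

lemma coeff_outside: "j \<notin> {1..n} \<Longrightarrow> coeff j x = 0"
  using coeff_char by blast

lemma sum_coeff_alpha: "(\<Sum>j\<in>{1..n}. coeff j x *\<^sub>R \<alpha> j) = x"
  using coeff_char[THEN conjunct2, symmetric] .

lemma coeff_sum_alpha:
  assumes "i \<in> {1..n}"
  shows "coeff i (\<Sum>j\<in>{1..n}. c j *\<^sub>R \<alpha> j) = c i"
proof -
  let ?x = "\<Sum>j\<in>{1..n}. c j *\<^sub>R \<alpha> j"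
  have "(\<Sum>j\<in>{1..n}. (coeff j ?x - c j) *\<^sub>R \<alpha> j) = 0"
    using sum_coeff_alpha[of ?x] by (simp add: scaleR_diff_left sum_subtractf)
  thus ?thesis
    using sum_alpha_eq_0 assms by fastforce
qed

lemma coeff_eqI: "(\<And>j. j \<in> {1..n} \<Longrightarrow> coeff j x = coeff j y) \<Longrightarrow> x = y"
  using sum.cong[of "{1..n}" "{1..n}" "\<lambda>j. coeff j x *\<^sub>R \<alpha> j" "\<lambda>j. coeff j y *\<^sub>R \<alpha> j"]
  by (simp only: sum_coeff_alpha)

lemma linear_coeff: "linear (coeff i)"
proof (cases "i \<in> {1..n}")
  case True
  show ?thesis
  proof (rule linearI)
    fix x y
    have "x + y = (\<Sum>j\<in>{1..n}. (coeff j x + coeff j y) *\<^sub>R \<alpha> j)"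
      by (simp only: scaleR_add_left sum.distrib sum_coeff_alpha)
    thus "coeff i (x + y) = coeff i x + coeff i y"
      using coeff_sum_alpha[OF True] by (simp only:)
  next
    fix r x
    have "r *\<^sub>R x = (\<Sum>j\<in>{1..n}. (r * coeff j x) *\<^sub>R \<alpha> j)"
      by (simp only: scaleR_scaleR[symmetric] scaleR_sum_right[symmetric] sum_coeff_alpha)
    thus "coeff i (r *\<^sub>R x) = r *\<^sub>R coeff i x"
      using coeff_sum_alpha[OF True] by (simp only: real_scaleR_def)
  qed
next
  case False
  thus ?thesis by (intro linearI) (simp_all add: coeff_outside)
qed

lemmas coeff_add = linear_add[OF linear_coeff]
   and coeff_diff = linear_diff[OF linear_coeff]
   and coeff_0 = linear_0[OF linear_coeff]
   and coeff_sum = linear_sum[OF linear_coeff]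

lemma coeff_scaleR: "coeff i (r *\<^sub>R x) = r * coeff i x"
  using linear_cmul[OF linear_coeff] by simp

lemma coeff_alpha: "j \<in> {1..n} \<Longrightarrow> coeff i (\<alpha> j) = (if i = j then 1 else 0)"
proof (cases "i \<in> {1..n}")
  case True
  assume j: "j \<in> {1..n}"
  have "(\<Sum>l\<in>{1..n}. (if l = j then 1 else 0) *\<^sub>R \<alpha> l) = (\<Sum>l\<in>{1..n}. if l = j then \<alpha> l else 0)"
    by (rule sum.cong) auto
  hence "\<alpha> j = (\<Sum>l\<in>{1..n}. (if l = j then 1 else 0) *\<^sub>R \<alpha> l)"
    using j by simp
  thus ?thesis using coeff_sum_alpha[OF True] by (simp only:)
qed (auto simp: coeff_outside)

lemma inner_eq_sum_coeff: "x \<bullet> y = (\<Sum>j\<in>{1..n}. coeff j x * (\<alpha> j \<bullet> y))"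
  by (subst (1) sum_coeff_alpha[of x, symmetric]) (simp add: inner_sum_left)

lemma coroot_pairing_eq_sum_coeff:
  "coroot_pairing (\<alpha> i) x = (\<Sum>l\<in>{1..n}. coeff l x * coroot_pairing (\<alpha> i) (\<alpha> l))"
  unfolding coroot_pairing_def
  by (subst inner_eq_sum_coeff) (simp add: sum_divide_distrib sum_distrib_left algebra_simps)

lemma coeff_reflection:
  "i \<in> {1..n} \<Longrightarrow>
     coeff l (reflection (\<alpha> i) x) = coeff l x - (if l = i then coroot_pairing (\<alpha> i) x else 0)"
  by (cases "l \<in> {1..n}") (auto simp: reflection_eq coeff_diff coeff_scaleR coeff_alpha coeff_outside)


lemma weyl_group_iff_word:
  "w \<in> weyl_group \<alpha> n \<longleftrightarrow> (\<exists>ws. set ws \<subseteq> {1..n} \<and> w = reflect_word \<alpha> ws)"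
proof
  assume "w \<in> weyl_group \<alpha> n"
  thus "\<exists>ws. set ws \<subseteq> {1..n} \<and> w = reflect_word \<alpha> ws"
  proof induction
    case id
    show ?case by (rule exI[of _ "[]"]) simp
  next
    case (refl w i)
    then obtain ws where "set ws \<subseteq> {1..n}" "w = reflect_word \<alpha> ws" by blast
    thus ?case using refl by (intro exI[of _ "i # ws"]) auto
  qed
next
  assume "\<exists>ws. set ws \<subseteq> {1..n} \<and> w = reflect_word \<alpha> ws"
  then obtain ws where ws: "set ws \<subseteq> {1..n}" "w = reflect_word \<alpha> ws" by blast
  have "set ws \<subseteq> {1..n} \<Longrightarrow> reflect_word \<alpha> ws \<in> weyl_group \<alpha> n"
    by (induction ws) (auto intro: weyl_group.intros)
  thus "w \<in> weyl_group \<alpha> n" using ws by simp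
qed

lemma reflect_word_inner:
  "set ws \<subseteq> {1..n} \<Longrightarrow> reflect_word \<alpha> ws x \<bullet> reflect_word \<alpha> ws y = x \<bullet> y"
  by (induction ws arbitrary: x y) (auto simp: reflection_inner alpha_nonzero)

lemma reflect_word_rev:
  "set ws \<subseteq> {1..n} \<Longrightarrow> reflect_word \<alpha> (rev ws) (reflect_word \<alpha> ws x) = x"
  by (induction ws arbitrary: x) (auto simp: reflect_word_append reflection_reflection alpha_nonzero)

lemma weyl_group_inverse:
  assumes "w \<in> weyl_group \<alpha> n"
  obtains w' where "w' \<in> weyl_group \<alpha> n" "\<And>x. w' (w x) = x"
proof -
  obtain ws where ws: "set ws \<subseteq> {1..n}" "w = reflect_word \<alpha> ws"
    using assms weyl_group_iff_word by blast
  hence "reflect_word \<alpha> (rev ws) \<in> weyl_group \<alpha> n"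
    unfolding weyl_group_iff_word by (intro exI[of _ "rev ws"]) simp
  thus ?thesis
    using reflect_word_rev[OF ws(1)] ws(2) by (intro that) simp_all
qed

section \<open>Every root is positive or negative\<close>

definition in_root_lattice :: "'a \<Rightarrow> bool" where
  "in_root_lattice x \<longleftrightarrow> (\<forall>l\<in>{1..n}. coeff l x \<in> \<int>)"

text \<open>The lattice spanned by the coroots \<open>2 \<alpha>\<^sub>l / |\<alpha>\<^sub>l|\<^sup>2\<close>.\<close>
definition in_coroot_lattice :: "'a \<Rightarrow> bool" where
  "in_coroot_lattice x \<longleftrightarrow> (\<forall>l\<in>{1..n}. coeff l x * (\<alpha> l \<bullet> \<alpha> l) / 2 \<in> \<int>)"

lemma root_lattice_coroot_pairing:
  "in_root_lattice x \<Longrightarrow> i \<in> {1..n} \<Longrightarrow> coroot_pairing (\<alpha> i) x \<in> \<int>"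
  unfolding coroot_pairing_eq_sum_coeff[of i x] in_root_lattice_def
  by (intro Ints_sum Ints_mult coroot_pairing_alpha_Ints) auto

lemma coroot_lattice_inner_alpha:
  assumes "in_coroot_lattice x" "i \<in> {1..n}"
  shows "x \<bullet> \<alpha> i \<in> \<int>"
proof -
  have "x \<bullet> \<alpha> i = (\<Sum>l\<in>{1..n}. (coeff l x * (\<alpha> l \<bullet> \<alpha> l) / 2) * coroot_pairing (\<alpha> l) (\<alpha> i))"
    unfolding inner_eq_sum_coeff[of x]
    by (rule sum.cong) (auto simp: coroot_pairing_def inner_commute dest: alpha_inner_self_pos)
  also have "\<dots> \<in> \<int>"
    using assms unfolding in_coroot_lattice_def
    by (intro Ints_sum Ints_mult coroot_pairing_alpha_Ints) auto
  finally show ?thesis .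
qed

lemma root_lattice_reflection:
  "in_root_lattice x \<Longrightarrow> i \<in> {1..n} \<Longrightarrow> in_root_lattice (reflection (\<alpha> i) x)"
  using root_lattice_coroot_pairing[of x i]
  by (auto simp: in_root_lattice_def coeff_reflection)

lemma coroot_lattice_reflection:
  assumes "in_coroot_lattice x" "i \<in> {1..n}"
  shows "in_coroot_lattice (reflection (\<alpha> i) x)"
  unfolding in_coroot_lattice_def
proof
  fix l assume l: "l \<in> {1..n}"
  have "coeff l (reflection (\<alpha> i) x) * (\<alpha> l \<bullet> \<alpha> l) / 2 =
        coeff l x * (\<alpha> l \<bullet> \<alpha> l) / 2 - (if l = i then x \<bullet> \<alpha> i else 0)"
    using alpha_inner_self_pos[OF assms(2)]
    by (auto simp: coeff_reflection[OF assms(2)] coroot_pairing_def field_simps)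
  also have "\<dots> \<in> \<int>"
    using assms l coroot_lattice_inner_alpha[OF assms] unfolding in_coroot_lattice_def by auto
  finally show "coeff l (reflection (\<alpha> i) x) * (\<alpha> l \<bullet> \<alpha> l) / 2 \<in> \<int>" .
qed

lemma root_lattice_reflect_word:
  "set ws \<subseteq> {1..n} \<Longrightarrow> in_root_lattice x \<Longrightarrow> in_root_lattice (reflect_word \<alpha> ws x)"
  by (induction ws) (auto intro: root_lattice_reflection)

lemma coroot_lattice_reflect_word:
  "set ws \<subseteq> {1..n} \<Longrightarrow> in_coroot_lattice x \<Longrightarrow> in_coroot_lattice (reflect_word \<alpha> ws x)"
  by (induction ws) (auto intro: coroot_lattice_reflection)

definition is_root :: "'a \<Rightarrow> bool" where
  "is_root \<beta> \<longleftrightarrow> (\<exists>ws j. set ws \<subseteq> {1..n} \<and> j \<in> {1..n} \<and> \<beta> = reflect_word \<alpha> ws (\<alpha> j))"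

definition nonneg_coeffs :: "'a \<Rightarrow> bool" where
  "nonneg_coeffs x \<longleftrightarrow> (\<forall>l\<in>{1..n}. coeff l x \<ge> 0)"

definition nonpos_coeffs :: "'a \<Rightarrow> bool" where
  "nonpos_coeffs x \<longleftrightarrow> (\<forall>l\<in>{1..n}. coeff l x \<le> 0)"

lemma root_reflection:
  assumes "is_root \<beta>" "i \<in> {1..n}"
  shows "is_root (reflection (\<alpha> i) \<beta>)"
proof -
  obtain ws j where "set ws \<subseteq> {1..n}" "j \<in> {1..n}" "\<beta> = reflect_word \<alpha> ws (\<alpha> j)"
    using assms(1) is_root_def by blast
  hence "set (i # ws) \<subseteq> {1..n} \<and> j \<in> {1..n} \<and> reflection (\<alpha> i) \<beta> = reflect_word \<alpha> (i # ws) (\<alpha> j)"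
    using assms(2) by simp
  thus ?thesis
    unfolding is_root_def by blast
qed

lemma root_inner_self_pos:
  assumes "is_root \<beta>"
  shows "\<beta> \<bullet> \<beta> > 0"
proof -
  obtain ws j where "set ws \<subseteq> {1..n}" "j \<in> {1..n}" "\<beta> = reflect_word \<alpha> ws (\<alpha> j)"
    using assms is_root_def by blast
  thus ?thesis
    using reflect_word_inner alpha_inner_self_pos by simp
qed

lemma root_coeff_Ints:
  assumes "is_root \<beta>" "l \<in> {1..n}"
  shows "coeff l \<beta> \<in> \<int>" "coeff l \<beta> * (\<alpha> l \<bullet> \<alpha> l) / (\<beta> \<bullet> \<beta>) \<in> \<int>"
proof -
  obtain ws j where ws: "set ws \<subseteq> {1..n}" "j \<in> {1..n}" "\<beta> = reflect_word \<alpha> ws (\<alpha> j)"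
    using assms(1) is_root_def by blast
  have norm: "\<beta> \<bullet> \<beta> = \<alpha> j \<bullet> \<alpha> j"
    using ws reflect_word_inner by simp
  have "in_root_lattice (\<alpha> j)"
    unfolding in_root_lattice_def using ws(2) by (auto simp: coeff_alpha)
  thus "coeff l \<beta> \<in> \<int>"
    using root_lattice_reflect_word ws assms(2) unfolding in_root_lattice_def by blast
  have "in_coroot_lattice ((2 / (\<alpha> j \<bullet> \<alpha> j)) *\<^sub>R \<alpha> j)"
    unfolding in_coroot_lattice_def using ws(2) alpha_inner_self_pos[OF ws(2)]
    by (auto simp: coeff_alpha coeff_scaleR)
  hence "in_coroot_lattice (reflect_word \<alpha> ws ((2 / (\<alpha> j \<bullet> \<alpha> j)) *\<^sub>R \<alpha> j))"
    by (rule coroot_lattice_reflect_word[OF ws(1)])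
  moreover have "reflect_word \<alpha> ws ((2 / (\<alpha> j \<bullet> \<alpha> j)) *\<^sub>R \<alpha> j) = (2 / (\<beta> \<bullet> \<beta>)) *\<^sub>R \<beta>"
    using norm ws(3) by (simp add: linear_cmul[OF linear_reflect_word])
  ultimately have "in_coroot_lattice ((2 / (\<beta> \<bullet> \<beta>)) *\<^sub>R \<beta>)"
    by simp
  thus "coeff l \<beta> * (\<alpha> l \<bullet> \<alpha> l) / (\<beta> \<bullet> \<beta>) \<in> \<int>"
    using assms(2) unfolding in_coroot_lattice_def by (simp add: coeff_scaleR)
qed


text \<open>The off-diagonal terms of \<open>|v|\<^sup>2 / N\<close> pair up into multiples of Cartan integers, so
  \<open>|v|\<^sup>2 / N\<close> is a positive integer.\<close>
lemma norm_sum_alpha_ge: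
  assumes N: "N > 0" and k: "\<And>l. l \<in> {1..n} \<Longrightarrow> 0 \<le> k l \<and> k l \<in> \<int> \<and> k l * (\<alpha> l \<bullet> \<alpha> l) / N \<in> \<int>"
    and a: "a \<in> {1..n}" "k a > 0"
  shows "N \<le> (\<Sum>l\<in>{1..n}. k l *\<^sub>R \<alpha> l) \<bullet> (\<Sum>l\<in>{1..n}. k l *\<^sub>R \<alpha> l)"
proof -
  define v where "v = (\<Sum>l\<in>{1..n}. k l *\<^sub>R \<alpha> l)"
  define g where "g l m = k l * k m * (\<alpha> l \<bullet> \<alpha> m) / N" for l m
  have "v \<bullet> v / N = (\<Sum>l\<in>{1..n}. \<Sum>m\<in>{1..n}. g l m)"
    unfolding v_def g_def
    by (simp add: inner_sum_left inner_sum_right sum_divide_distrib sum_distrib_left algebra_simps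
        inner_commute)
  also have "\<dots> = (\<Sum>l\<in>{1..n}. g l l) + 2 * (\<Sum>l\<in>{1..n}. \<Sum>m\<in>{m\<in>{1..n}. m < l}. g l m)"
    by (rule sum_sum_symmetric) (auto simp: g_def inner_commute)
  also have "\<dots> \<in> \<int>"
  proof (intro Ints_add Ints_sum)
    fix l assume l: "l \<in> {1..n}"
    have "g l l = k l * (k l * (\<alpha> l \<bullet> \<alpha> l) / N)"
      by (simp add: g_def)
    also have "\<dots> \<in> \<int>"
      using k[OF l] by (intro Ints_mult) auto
    finally show "g l l \<in> \<int>" .
  next
    have "2 * g l m = k l * (k m * (\<alpha> m \<bullet> \<alpha> m) / N) * coroot_pairing (\<alpha> m) (\<alpha> l)"
      if "m \<in> {1..n}" for l m
      using alpha_inner_self_pos[OF that] by (simp add: g_def coroot_pairing_def field_simps)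
    hence "2 * (\<Sum>l\<in>{1..n}. \<Sum>m\<in>{m\<in>{1..n}. m < l}. g l m) =
        (\<Sum>l\<in>{1..n}. \<Sum>m\<in>{m\<in>{1..n}. m < l}.
           k l * (k m * (\<alpha> m \<bullet> \<alpha> m) / N) * coroot_pairing (\<alpha> m) (\<alpha> l))"
      by (simp add: sum_distrib_left)
    also have "\<dots> \<in> \<int>"
      using k by (intro Ints_sum Ints_mult coroot_pairing_alpha_Ints) auto
    finally show "2 * (\<Sum>l\<in>{1..n}. \<Sum>m\<in>{m\<in>{1..n}. m < l}. g l m) \<in> \<int>" .
  qed
  finally have "v \<bullet> v / N \<in> \<int>" .
  moreover have "coeff a v = k a"
    unfolding v_def by (rule coeff_sum_alpha[OF a(1)])
  hence "v \<noteq> 0"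
    using a(2) by (auto simp: coeff_0)
  ultimately have "1 \<le> v \<bullet> v / N"
    using N Ints_nonzero_abs_ge1[of "v \<bullet> v / N"] by simp
  thus ?thesis
    using N unfolding v_def[symmetric] by (simp add: field_simps)
qed

lemma inner_sum_alpha_disjoint_nonpos:
  assumes "\<And>l. l \<in> {1..n} \<Longrightarrow> 0 \<le> p l \<and> 0 \<le> q l \<and> p l * q l = 0"
  shows "(\<Sum>l\<in>{1..n}. p l *\<^sub>R \<alpha> l) \<bullet> (\<Sum>m\<in>{1..n}. q m *\<^sub>R \<alpha> m) \<le> 0"
proof -
  have "(\<Sum>l\<in>{1..n}. p l *\<^sub>R \<alpha> l) \<bullet> (\<Sum>m\<in>{1..n}. q m *\<^sub>R \<alpha> m) =
        (\<Sum>l\<in>{1..n}. \<Sum>m\<in>{1..n}. p l * q m * (\<alpha> l \<bullet> \<alpha> m))"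
    by (simp only: inner_sum_left) (simp add: inner_sum_right sum_distrib_left mult.assoc mult.left_commute)
  also have "\<dots> \<le> 0"
  proof (intro sum_nonpos)
    fix l m assume l: "l \<in> {1..n}" and m: "m \<in> {1..n}"
    show "p l * q m * (\<alpha> l \<bullet> \<alpha> m) \<le> 0"
    proof (cases "l = m")
      case False
      thus ?thesis using assms[OF l] assms[OF m] alpha_inner_nonpos[OF l m]
        by (simp add: mult_nonneg_nonpos)
    qed (use assms[OF l] in auto)
  qed
  finally show ?thesis .
qed

text \<open>Splitting a root as \<open>\<beta> = v\<^sup>+ - v\<^sup>-\<close> into its positive and negative parts, both
  parts would have squared norm at least \<open>|\<beta>|\<^sup>2\<close> while \<open>v\<^sup>+ \<bullet> v\<^sup>- \<le> 0\<close>.\<close>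
lemma root_nonneg_or_nonpos:
  assumes "is_root \<beta>"
  shows "nonneg_coeffs \<beta> \<or> nonpos_coeffs \<beta>"
proof (rule ccontr)
  assume "\<not> ?thesis"
  then obtain a b where a: "a \<in> {1..n}" "coeff a \<beta> > 0" and b: "b \<in> {1..n}" "coeff b \<beta> < 0"
    unfolding nonneg_coeffs_def nonpos_coeffs_def by force
  define N where "N = \<beta> \<bullet> \<beta>"
  define vp where "vp = (\<Sum>l\<in>{1..n}. max (coeff l \<beta>) 0 *\<^sub>R \<alpha> l)"
  define vn where "vn = (\<Sum>l\<in>{1..n}. max (- coeff l \<beta>) 0 *\<^sub>R \<alpha> l)"
  have N: "N > 0"
    using root_inner_self_pos[OF assms] by (simp add: N_def)
  note int = root_coeff_Ints[OF assms, folded N_def]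
  have "vp - vn = (\<Sum>l\<in>{1..n}. (max (coeff l \<beta>) 0 - max (- coeff l \<beta>) 0) *\<^sub>R \<alpha> l)"
    by (simp add: vp_def vn_def scaleR_diff_left sum_subtractf)
  also have "\<dots> = (\<Sum>l\<in>{1..n}. coeff l \<beta> *\<^sub>R \<alpha> l)"
    by (rule sum.cong) (auto simp: max_def)
  finally have split: "vp - vn = \<beta>"
    by (simp only: sum_coeff_alpha)
  have "0 \<le> max (coeff l \<beta>) 0 \<and> max (coeff l \<beta>) 0 \<in> \<int> \<and>
        max (coeff l \<beta>) 0 * (\<alpha> l \<bullet> \<alpha> l) / N \<in> \<int>" if "l \<in> {1..n}" for l
    using int[OF that] by (auto simp: max_def)
  hence "N \<le> vp \<bullet> vp"
    unfolding vp_def using a by (intro norm_sum_alpha_ge[OF N _ a(1)]) auto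
  moreover have "0 \<le> max (- coeff l \<beta>) 0 \<and> max (- coeff l \<beta>) 0 \<in> \<int> \<and>
        max (- coeff l \<beta>) 0 * (\<alpha> l \<bullet> \<alpha> l) / N \<in> \<int>" if "l \<in> {1..n}" for l
    using int[OF that] Ints_minus[of "coeff l \<beta> * (\<alpha> l \<bullet> \<alpha> l) / N"] by (auto simp: max_def)
  hence "N \<le> vn \<bullet> vn"
    unfolding vn_def using b by (intro norm_sum_alpha_ge[OF N _ b(1)]) auto
  moreover have "vp \<bullet> vn \<le> 0"
    unfolding vp_def vn_def by (rule inner_sum_alpha_disjoint_nonpos) (auto simp: max_def)
  moreover have "N = vp \<bullet> vp - 2 * (vp \<bullet> vn) + vn \<bullet> vn"
    unfolding N_def split[symmetric] by (simp add: inner_diff_left inner_diff_right inner_commute)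
  ultimately show False
    using N by linarith
qed

text \<open>Only the \<open>\<alpha>\<^sub>i\<close>-coefficient \<open>c\<close> of \<open>\<gamma>\<close> survives, and integrality forces both \<open>c\<close> and
  \<open>1 / c\<close> to be positive integers.\<close>
lemma root_eq_alpha_if_reflection_not_nonneg:
  assumes r: "is_root \<gamma>" and p: "nonneg_coeffs \<gamma>" and i: "i \<in> {1..n}"
    and np: "\<not> nonneg_coeffs (reflection (\<alpha> i) \<gamma>)"
  shows "\<gamma> = \<alpha> i"
proof -
  have "nonpos_coeffs (reflection (\<alpha> i) \<gamma>)"
    using root_nonneg_or_nonpos[OF root_reflection[OF r i]] np by blast
  hence zero: "coeff l \<gamma> = 0" if "l \<in> {1..n}" "l \<noteq> i" for l
    using p that unfolding nonpos_coeffs_def nonneg_coeffs_def by (force simp: coeff_reflection[OF i])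
  define c where "c = coeff i \<gamma>"
  have gamma_eq: "\<gamma> = c *\<^sub>R \<alpha> i"
    by (rule coeff_eqI) (use zero i in \<open>auto simp: coeff_scaleR coeff_alpha c_def\<close>)
  have "c \<noteq> 0"
    using root_inner_self_pos[OF r] gamma_eq by auto
  moreover have "c \<ge> 0"
    using p i unfolding nonneg_coeffs_def c_def by blast
  ultimately have "c \<ge> 1"
    using root_coeff_Ints(1)[OF r i] Ints_nonzero_abs_ge1[of c] by (simp add: c_def)
  have "coeff i \<gamma> * (\<alpha> i \<bullet> \<alpha> i) / (\<gamma> \<bullet> \<gamma>) = 1 / c"
    using \<open>c \<noteq> 0\<close> alpha_inner_self_pos[OF i] by (simp add: gamma_eq coeff_scaleR coeff_alpha[OF i])
  hence "1 \<le> \<bar>1 / c\<bar>"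
    using root_coeff_Ints(2)[OF r i] Ints_nonzero_abs_ge1[of "1 / c"] \<open>c \<noteq> 0\<close> by simp
  hence "c \<le> 1"
    using \<open>c \<ge> 1\<close> by (simp add: field_simps)
  hence "c = 1"
    using \<open>c \<ge> 1\<close> by simp
  thus ?thesis using gamma_eq by simp
qed

text \<open>Exchange condition: the first letter \<open>j\<close> of the word that turns the positive root
  into a non-positive one must act on \<open>\<alpha>\<^sub>j\<close>, and then \<open>s\<^sub>j\<close> and \<open>s\<^sub>i\<close> cancel by conjugation.\<close>
lemma reflect_word_exchange:
  assumes "set as \<subseteq> {1..n}" "i \<in> {1..n}" "\<not> nonneg_coeffs (reflect_word \<alpha> as (\<alpha> i))"
  shows "\<exists>bs. set bs \<subseteq> {1..n} \<and> length bs < length as \<and> reflect_word \<alpha> (as @ [i]) = reflect_word \<alpha> bs"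
  using assms
proof (induction as)
  case Nil
  thus ?case by (auto simp: nonneg_coeffs_def coeff_alpha split: if_splits)
next
  case (Cons j as)
  show ?case
  proof (cases "nonneg_coeffs (reflect_word \<alpha> as (\<alpha> i))")
    case False
    then obtain bs where "set bs \<subseteq> {1..n}" "length bs < length as"
        "reflect_word \<alpha> (as @ [i]) = reflect_word \<alpha> bs"
      using Cons by auto
    thus ?thesis using Cons.prems by (intro exI[of _ "j # bs"]) auto
  next
    case True
    have j: "j \<in> {1..n}" and as: "set as \<subseteq> {1..n}"
      using Cons.prems by auto
    have "is_root (reflect_word \<alpha> as (\<alpha> i))"
      unfolding is_root_def using as Cons.prems(2) by blast
    moreover have "\<not> nonneg_coeffs (reflection (\<alpha> j) (reflect_word \<alpha> as (\<alpha> i)))"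
      using Cons.prems(3) by simp
    ultimately have \<gamma>: "reflect_word \<alpha> as (\<alpha> i) = \<alpha> j"
      using True j by (intro root_eq_alpha_if_reflection_not_nonneg)
    have "reflect_word \<alpha> ((j # as) @ [i]) = reflect_word \<alpha> as"
    proof
      fix x
      have "reflect_word \<alpha> as (reflection (\<alpha> i) x) =
            reflection (reflect_word \<alpha> as (\<alpha> i)) (reflect_word \<alpha> as x)"
        by (rule reflection_conjugate[OF linear_reflect_word reflect_word_inner[OF as]])
      thus "reflect_word \<alpha> ((j # as) @ [i]) x = reflect_word \<alpha> as x"
        using \<gamma> by (simp add: reflect_word_append reflection_reflection alpha_nonzero[OF j])
    qed
    thus ?thesis using as by (intro exI[of _ as]) auto
  qed
qed

lemma reduced_word_prefix_nonneg:
  assumes ws: "set ws \<subseteq> {1..n}"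
    and min: "\<And>vs. set vs \<subseteq> {1..n} \<Longrightarrow> reflect_word \<alpha> vs = reflect_word \<alpha> ws \<Longrightarrow> length ws \<le> length vs"
    and split: "ws = as @ i # bs"
  shows "nonneg_coeffs (reflect_word \<alpha> as (\<alpha> i))"
proof (rule ccontr)
  assume "\<not> nonneg_coeffs (reflect_word \<alpha> as (\<alpha> i))"
  moreover have "set as \<subseteq> {1..n}" "i \<in> {1..n}" "set bs \<subseteq> {1..n}"
    using ws split by auto
  ultimately obtain cs where cs: "set cs \<subseteq> {1..n}" "length cs < length as"
      "reflect_word \<alpha> (as @ [i]) = reflect_word \<alpha> cs"
    using reflect_word_exchange by blast
  have "reflect_word \<alpha> (cs @ bs) = reflect_word \<alpha> ws"
    using split by (simp add: reflect_word_append o_assoc flip: cs(3))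
  with min[of "cs @ bs"] show False
    using cs split \<open>set bs \<subseteq> {1..n}\<close> by simp
qed

section \<open>Dominant weights\<close>

definition dominant :: "'a \<Rightarrow> bool" where
  "dominant \<mu> \<longleftrightarrow> (\<forall>l\<in>{1..n}. coroot_pairing (\<alpha> l) \<mu> \<ge> 0)"

lemma nonneg_coeffs_add: "nonneg_coeffs x \<Longrightarrow> nonneg_coeffs y \<Longrightarrow> nonneg_coeffs (x + y)"
  by (auto simp: nonneg_coeffs_def coeff_add)

lemma nonneg_coeffs_scaleR: "c \<ge> 0 \<Longrightarrow> nonneg_coeffs x \<Longrightarrow> nonneg_coeffs (c *\<^sub>R x)"
  by (auto simp: nonneg_coeffs_def coeff_scaleR)

text \<open>Telescoping along the word writes \<open>\<mu> - w\<mu>\<close> as a sum of the roots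
  \<open>reflect_word \<alpha> as (\<alpha> i)\<close> over the splittings \<open>ws = as @ i # bs\<close>, with the nonnegative
  coefficients \<open>\<langle>\<mu>, \<alpha>\<^sub>i\<^sup>\<or>\<rangle>\<close>.\<close>
lemma dominant_minus_reflect_word_nonneg:
  assumes "set ws \<subseteq> {1..n}" "dominant \<mu>"
    and "\<And>as i bs. ws = as @ i # bs \<Longrightarrow> nonneg_coeffs (reflect_word \<alpha> as (\<alpha> i))"
  shows "nonneg_coeffs (\<mu> - reflect_word \<alpha> ws \<mu>)"
  using assms(1,3)
proof (induction ws rule: rev_induct)
  case Nil
  thus ?case by (simp add: nonneg_coeffs_def coeff_0)
next
  case (snoc i as)
  have i: "i \<in> {1..n}"
    using snoc.prems by simp
  have eq: "\<mu> - reflect_word \<alpha> (as @ [i]) \<mu> =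
        (\<mu> - reflect_word \<alpha> as \<mu>) + coroot_pairing (\<alpha> i) \<mu> *\<^sub>R reflect_word \<alpha> as (\<alpha> i)"
    by (simp add: reflect_word_append reflection_eq linear_diff[OF linear_reflect_word]
        linear_cmul[OF linear_reflect_word] algebra_simps)
  have "nonneg_coeffs (\<mu> - reflect_word \<alpha> as \<mu>)"
    using snoc.IH snoc.prems by force
  moreover have "nonneg_coeffs (reflect_word \<alpha> as (\<alpha> i))"
    using snoc.prems(2)[of as i "[]"] by simp
  moreover have "coroot_pairing (\<alpha> i) \<mu> \<ge> 0"
    using assms(2) i unfolding dominant_def by blast
  ultimately show ?case
    unfolding eq by (simp add: nonneg_coeffs_add nonneg_coeffs_scaleR)
qed

lemma dominant_minus_weyl_nonneg:
  assumes "w \<in> weyl_group \<alpha> n" "dominant \<mu>"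
  shows "nonneg_coeffs (\<mu> - w \<mu>)"
proof -
  let ?P = "\<lambda>ws. set ws \<subseteq> {1..n} \<and> w = reflect_word \<alpha> ws"
  obtain ws0 where "?P ws0"
    using assms(1) weyl_group_iff_word by blast
  then obtain ws where ws: "?P ws" and min: "\<And>vs. ?P vs \<Longrightarrow> length ws \<le> length vs"
    using ex_has_least_nat[of ?P ws0 length] by blast
  have "nonneg_coeffs (\<mu> - reflect_word \<alpha> ws \<mu>)"
  proof (rule dominant_minus_reflect_word_nonneg[OF _ assms(2)])
    show "set ws \<subseteq> {1..n}"
      using ws by simp
    show "nonneg_coeffs (reflect_word \<alpha> as (\<alpha> i))" if "ws = as @ i # bs" for as i bs
      by (rule reduced_word_prefix_nonneg[OF _ _ that]) (use ws min in auto)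
  qed
  thus ?thesis using ws by simp
qed

end

section \<open>Faces of the weight polytope\<close>

lemma lam_component_subset: "lam_component \<alpha> lam S \<subseteq> S"
proof
  fix j assume "j \<in> lam_component \<alpha> lam S"
  thus "j \<in> S" by induction auto
qed

locale dominant_weight = simple_roots +
  fixes lam :: 'a
  assumes dominant_integral: "dominant_integral \<alpha> n lam"
begin

abbreviation orbit :: "'a set" where
  "orbit \<equiv> {w lam | w. w \<in> weyl_group \<alpha> n}"

abbreviation polytope :: "'a set" where
  "polytope \<equiv> weight_polytope \<alpha> n lam"

abbreviation face :: "nat set \<Rightarrow> 'a set" where
  "face \<equiv> weight_face \<alpha> n lam"

abbreviation component :: "nat set \<Rightarrow> nat set" where
  "component \<equiv> compl0 \<alpha> n lam"

lemma dominant_lam: "dominant lam"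
  using dominant_integral
  by (auto simp: dominant_def dominant_integral_def coroot_pairing_def Nats_altdef2)

lemma lam_inner_alpha_nonneg:
  assumes "i \<in> {1..n}"
  shows "lam \<bullet> \<alpha> i \<ge> 0"
proof -
  have "0 \<le> 2 * (lam \<bullet> \<alpha> i) / (\<alpha> i \<bullet> \<alpha> i)"
    using dominant_lam assms unfolding dominant_def coroot_pairing_def by blast
  thus ?thesis
    using alpha_inner_self_pos[OF assms] by (simp add: zero_le_divide_iff)
qed

lemma lam_in_orbit: "lam \<in> orbit"
  unfolding mem_Collect_eq by (rule exI[of _ id]) (simp add: weyl_group.id)

lemma orbit_reflection:
  assumes "\<mu> \<in> orbit" "i \<in> {1..n}"
  shows "reflection (\<alpha> i) \<mu> \<in> orbit"
proof -
  obtain w where "w \<in> weyl_group \<alpha> n" "\<mu> = w lam"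
    using assms(1) by blast
  hence "reflection (\<alpha> i) \<circ> w \<in> weyl_group \<alpha> n \<and> reflection (\<alpha> i) \<mu> = (reflection (\<alpha> i) \<circ> w) lam"
    using assms(2) by (simp add: weyl_group.refl)
  thus ?thesis by blast
qed

lemma orbit_coeff_le:
  assumes "\<mu> \<in> orbit"
  shows "coeff l \<mu> \<le> coeff l lam"
proof (cases "l \<in> {1..n}")
  case True
  obtain w where "w \<in> weyl_group \<alpha> n" "\<mu> = w lam"
    using assms by blast
  hence "nonneg_coeffs (lam - \<mu>)"
    using dominant_minus_weyl_nonneg dominant_lam by simp
  thus ?thesis
    using True by (simp add: nonneg_coeffs_def coeff_diff)
qed (simp add: coeff_outside)

lemma orbit_root_lattice:
  assumes "w \<in> weyl_group \<alpha> n"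
  shows "in_root_lattice (lam - w lam)"
  using assms
proof induction
  case id
  show ?case by (simp add: in_root_lattice_def coeff_0)
next
  case (refl w i)
  have "coroot_pairing (\<alpha> i) (w lam) = coroot_pairing (\<alpha> i) lam - coroot_pairing (\<alpha> i) (lam - w lam)"
    by (simp add: linear_diff[OF linear_coroot_pairing])
  moreover have "coroot_pairing (\<alpha> i) lam \<in> \<int>"
    using dominant_integral refl.hyps(2) Nats_subset_Ints
    by (auto simp: dominant_integral_def coroot_pairing_def)
  ultimately have "coroot_pairing (\<alpha> i) (w lam) \<in> \<int>"
    using root_lattice_coroot_pairing[OF refl.IH refl.hyps(2)] by simp
  show ?case
    unfolding in_root_lattice_def
  proof
    fix l assume l: "l \<in> {1..n}"
    have "coeff l (lam - (reflection (\<alpha> i) \<circ> w) lam) =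
          coeff l (lam - w lam) + (if l = i then coroot_pairing (\<alpha> i) (w lam) else 0)"
      using refl.hyps(2) by (simp add: coeff_diff coeff_reflection)
    also have "\<dots> \<in> \<int>"
      using refl.IH l \<open>coroot_pairing (\<alpha> i) (w lam) \<in> \<int>\<close> unfolding in_root_lattice_def by auto
    finally show "coeff l (lam - (reflection (\<alpha> i) \<circ> w) lam) \<in> \<int>" .
  qed
qed

lemma orbit_dominant_eq_lam:
  assumes "\<mu> \<in> orbit" "dominant \<mu>"
  shows "\<mu> = lam"
proof -
  obtain w where w: "w \<in> weyl_group \<alpha> n" "\<mu> = w lam"
    using assms(1) by blast
  obtain w' where w': "w' \<in> weyl_group \<alpha> n" "\<And>x. w' (w x) = x"
    using weyl_group_inverse[OF w(1)] by blast
  have "nonneg_coeffs (\<mu> - lam)"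
    using dominant_minus_weyl_nonneg[OF w'(1) assms(2)] w' w(2) by simp
  moreover have "nonneg_coeffs (lam - \<mu>)"
    using dominant_minus_weyl_nonneg[OF w(1) dominant_lam] w(2) by simp
  ultimately show ?thesis
    by (intro coeff_eqI) (force simp: nonneg_coeffs_def coeff_diff)
qed

lemma polytope_coeff_le:
  assumes "x \<in> polytope"
  shows "coeff l x \<le> coeff l lam"
proof -
  have "convex (coeff l -` {..coeff l lam})"
    by (rule convex_linear_vimage[OF linear_coeff convex_real_interval(2)])
  moreover have "orbit \<subseteq> coeff l -` {..coeff l lam}"
    using orbit_coeff_le by blast
  ultimately have "polytope \<subseteq> coeff l -` {..coeff l lam}"
    unfolding weight_polytope_def by (rule hull_minimal[rotated])
  thus ?thesis using assms by blast
qed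

lemma polytope_reflection:
  assumes "x \<in> polytope" "i \<in> {1..n}"
  shows "reflection (\<alpha> i) x \<in> polytope"
proof -
  have "reflection (\<alpha> i) ` polytope = convex hull (reflection (\<alpha> i) ` orbit)"
    unfolding weight_polytope_def by (rule convex_hull_linear_image[OF linear_reflection])
  also have "\<dots> \<subseteq> polytope"
    unfolding weight_polytope_def using orbit_reflection[OF _ assms(2)]
    by (intro hull_mono) blast
  finally show ?thesis using assms(1) by blast
qed

lemma mem_face_iff: "x \<in> face I \<longleftrightarrow> x \<in> polytope \<and> (\<forall>i\<in>I. coeff i x = coeff i lam)"
  by (simp add: weight_face_def)

lemma lam_in_face: "lam \<in> face I"
proof -
  have "lam \<in> polytope"
    unfolding weight_polytope_def by (rule hull_inc[OF lam_in_orbit])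
  thus ?thesis by (simp add: mem_face_iff)
qed

lemma face_reflection:
  assumes "x \<in> face I" "j \<in> {1..n} - I"
  shows "reflection (\<alpha> j) x \<in> face I"
  using assms polytope_reflection by (auto simp: mem_face_iff coeff_reflection)

lemma coeff_reflection_lt:
  "j \<in> {1..n} \<Longrightarrow> x \<bullet> \<alpha> j > 0 \<Longrightarrow> coeff j (reflection (\<alpha> j) x) < coeff j x"
  using alpha_inner_self_pos[of j] by (simp add: coeff_reflection coroot_pairing_def)

text \<open>The difference \<open>lam - x\<close> has nonnegative coefficients, its \<open>\<alpha>\<^sub>j\<close>-coefficient
  vanishes and its \<open>\<alpha>\<^sub>i\<close>-coefficient is positive, so \<open>(lam - x) \<bullet> \<alpha>\<^sub>j < 0\<close> because the
  simple roots are pairwise obtuse.\<close>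
lemma polytope_inner_alpha_pos:
  assumes x: "x \<in> polytope" and ij: "i \<in> {1..n}" "j \<in> {1..n}" "dynkin_adj \<alpha> i j"
    and lt: "coeff i x < coeff i lam" and eq: "coeff j x = coeff j lam"
  shows "x \<bullet> \<alpha> j > 0"
proof -
  define D where "D = lam - x"
  have coeff_D: "coeff l D = coeff l lam - coeff l x" for l
    by (simp add: D_def coeff_diff)
  have "\<alpha> i \<bullet> \<alpha> j < 0"
    using alpha_inner_nonpos[OF ij(1,2)] ij(3) unfolding dynkin_adj_def by fastforce
  hence "coeff i D * (\<alpha> i \<bullet> \<alpha> j) < 0"
    using lt coeff_D by (simp add: mult_pos_neg)
  moreover have "coeff l D * (\<alpha> l \<bullet> \<alpha> j) \<le> 0" if "l \<in> {1..n} - {i}" for l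
  proof (cases "l = j")
    case False
    thus ?thesis
      using that ij alpha_inner_nonpos[of l j] polytope_coeff_le[OF x, of l] coeff_D
      by (simp add: mult_nonneg_nonpos)
  qed (simp add: coeff_D eq)
  ultimately have "coeff i D * (\<alpha> i \<bullet> \<alpha> j) + (\<Sum>l\<in>{1..n} - {i}. coeff l D * (\<alpha> l \<bullet> \<alpha> j)) < 0"
    by (smt (verit) sum_nonpos)
  hence "D \<bullet> \<alpha> j < 0"
    using ij(1) by (simp add: inner_eq_sum_coeff[of D] sum.remove)
  thus ?thesis
    using lam_inner_alpha_nonneg[OF ij(2)] by (simp add: D_def inner_diff_left)
qed

lemma component_coeff_lt:
  assumes "j \<in> component I"
  shows "\<exists>x\<in>face I. coeff j x < coeff j lam"
  using assms unfolding compl0_def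
proof induction
  case (base j)
  hence "reflection (\<alpha> j) lam \<in> face I" "coeff j (reflection (\<alpha> j) lam) < coeff j lam"
    using face_reflection[OF lam_in_face] coeff_reflection_lt by auto
  thus ?case by blast
next
  case (step i j)
  then obtain x where x: "x \<in> face I" "coeff i x < coeff i lam"
    by blast
  have i: "i \<in> {1..n}"
    using step.hyps(1) lam_component_subset by blast
  show ?case
  proof (cases "coeff j x < coeff j lam")
    case False
    hence "coeff j x = coeff j lam"
      using polytope_coeff_le x(1) by (simp add: mem_face_iff order.antisym)
    hence "x \<bullet> \<alpha> j > 0"
      using polytope_inner_alpha_pos x i step.hyps(2,3) by (simp add: mem_face_iff)
    hence "coeff j (reflection (\<alpha> j) x) < coeff j lam"
      using coeff_reflection_lt step.hyps(2) \<open>coeff j x = _\<close> by fastforce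
    thus ?thesis
      using face_reflection[OF x(1) step.hyps(2)] by blast
  qed (use x in blast)
qed

definition height :: "'a \<Rightarrow> real" where
  "height \<mu> = (\<Sum>l\<in>{1..n}. coeff l (lam - \<mu>))"

lemma height_orbit_Nats:
  assumes "\<mu> \<in> orbit"
  shows "height \<mu> \<in> \<nat>"
proof -
  obtain w where w: "w \<in> weyl_group \<alpha> n" "\<mu> = w lam"
    using assms by blast
  have "height \<mu> \<in> \<int>"
    unfolding height_def using orbit_root_lattice[OF w(1)]
    by (intro Ints_sum) (simp add: in_root_lattice_def w(2))
  moreover have "height \<mu> \<ge> 0"
    unfolding height_def using orbit_coeff_le[OF assms] by (intro sum_nonneg) (simp add: coeff_diff)
  ultimately show ?thesis
    by (simp add: Nats_altdef2)
qed

lemma height_reflection: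
  assumes "i \<in> {1..n}"
  shows "height (reflection (\<alpha> i) \<mu>) = height \<mu> + coroot_pairing (\<alpha> i) \<mu>"
proof -
  have "coeff l (lam - reflection (\<alpha> i) \<mu>) =
        coeff l (lam - \<mu>) + (if l = i then coroot_pairing (\<alpha> i) \<mu> else 0)" for l
    using assms by (simp add: coeff_diff coeff_reflection)
  thus ?thesis
    using assms by (simp add: height_def sum.distrib)
qed

text \<open>No neighbour of \<open>\<alpha>\<^sub>i\<close> lies in the component (or \<open>i\<close> would), so only coefficients
  that agree with those of \<open>lam\<close> contribute to \<open>(lam - y) \<bullet> \<alpha>\<^sub>i\<close>.\<close>
lemma inner_alpha_eq_0_outside_component:
  assumes i: "i \<in> {1..n} - I" "i \<notin> component I"
    and y: "\<And>l. l \<notin> component I \<Longrightarrow> coeff l y = coeff l lam"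
  shows "y \<bullet> \<alpha> i = 0"
proof -
  have "lam \<bullet> \<alpha> i = 0"
    using lam_component.base[OF i(1)] i lam_inner_alpha_nonneg[of i] by (force simp: compl0_def)
  moreover have zero: "coeff l (lam - y) * (\<alpha> l \<bullet> \<alpha> i) = 0" for l
  proof (cases "l \<in> component I")
    case True
    hence "\<not> dynkin_adj \<alpha> l i" "l \<noteq> i"
      using lam_component.step[of l \<alpha> lam "{1..n} - I" i] i by (auto simp: compl0_def)
    thus ?thesis by (simp add: dynkin_adj_def)
  qed (simp add: y coeff_diff)
  moreover have "(lam - y) \<bullet> \<alpha> i = 0"
    unfolding inner_eq_sum_coeff[of "lam - y"] by (simp add: zero)
  ultimately show ?thesis
    by (simp add: inner_diff_left)
qed

lemma orbit_coeff_eq_outside_component: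
  assumes "\<mu> \<in> orbit" "\<forall>i\<in>I. coeff i \<mu> = coeff i lam" "j \<notin> component I"
  shows "coeff j \<mu> = coeff j lam"
proof -
  obtain k where "height \<mu> = of_nat k"
    using height_orbit_Nats[OF assms(1)] Nats_cases by blast
  thus ?thesis
    using assms
  proof (induction k arbitrary: \<mu> j rule: less_induct)
    case (less k \<mu>)
    show ?case
    proof (cases "dominant \<mu>")
      case True
      thus ?thesis using orbit_dominant_eq_lam[OF less.prems(2)] by simp
    next
      case False
      then obtain i where i: "i \<in> {1..n}" "coroot_pairing (\<alpha> i) \<mu> < 0"
        unfolding dominant_def by force
      define \<mu>' where "\<mu>' = reflection (\<alpha> i) \<mu>"
      have coeff': "coeff l \<mu>' = coeff l \<mu> - (if l = i then coroot_pairing (\<alpha> i) \<mu> else 0)" for l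
        unfolding \<mu>'_def by (rule coeff_reflection[OF i(1)])
      have orbit': "\<mu>' \<in> orbit"
        unfolding \<mu>'_def by (rule orbit_reflection[OF less.prems(2) i(1)])
      have "i \<notin> I"
        using less.prems(3) orbit_coeff_le[OF orbit', of i] coeff'[of i] i(2) by auto
      hence face': "\<forall>l\<in>I. coeff l \<mu>' = coeff l lam"
        using less.prems(3) coeff' by auto
      obtain k' where k': "height \<mu>' = of_nat k'"
        using height_orbit_Nats[OF orbit'] Nats_cases by blast
      have "k' < k"
        using height_reflection[OF i(1), of \<mu>] i(2) k' less.prems(1) by (simp add: \<mu>'_def)
      note IH = less.IH[OF this k' orbit' face']
      have "i \<in> component I"
      proof (rule ccontr)
        assume "i \<notin> component I"
        hence "\<mu>' \<bullet> \<alpha> i = 0"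
          using \<open>i \<notin> I\<close> i(1) IH by (intro inner_alpha_eq_0_outside_component) auto
        moreover have "coroot_pairing (\<alpha> i) \<mu>' > 0"
          using i alpha_nonzero by (simp add: \<mu>'_def coroot_pairing_reflection_self)
        ultimately show False
          by (simp add: coroot_pairing_def inner_commute)
      qed
      hence "j \<noteq> i"
        using less.prems(4) by blast
      thus ?thesis
        using IH[OF less.prems(4)] coeff'[of j] by simp
    qed
  qed
qed

lemma face_coeff_eq_outside_component:
  assumes x: "x \<in> face I" and j: "j \<notin> component I"
  shows "coeff j x = coeff j lam"
proof -
  obtain S u where S: "finite S" "S \<subseteq> orbit" "\<forall>y\<in>S. 0 \<le> u y" "sum u S = 1"
    and x_eq: "x = (\<Sum>y\<in>S. u y *\<^sub>R y)"
    using x unfolding mem_face_iff weight_polytope_def convex_hull_explicit by auto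
  have coeff_x: "coeff l x = (\<Sum>y\<in>S. u y * coeff l y)" for l
    unfolding x_eq by (simp add: coeff_sum coeff_scaleR)
  have "coeff j y = coeff j lam" if y: "y \<in> S" "u y \<noteq> 0" for y
  proof (rule orbit_coeff_eq_outside_component[OF _ _ j])
    show "y \<in> orbit"
      using S(2) y(1) by blast
    show "\<forall>i\<in>I. coeff i y = coeff i lam"
    proof
      fix i assume "i \<in> I"
      show "coeff i y = coeff i lam"
      proof (rule convex_combination_eq_max[OF S(1) _ S(4) _ _ y])
        show "0 \<le> u z" if "z \<in> S" for z
          using S(3) that by blast
        show "coeff i z \<le> coeff i lam" if "z \<in> S" for z
          using S(2) that orbit_coeff_le by blast
        show "(\<Sum>z\<in>S. u z * coeff i z) = coeff i lam"
          using x \<open>i \<in> I\<close> coeff_x by (simp add: mem_face_iff)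
      qed
    qed
  qed
  hence "(\<Sum>y\<in>S. u y * coeff j y) = (\<Sum>y\<in>S. u y * coeff j lam)"
    by (intro sum.cong) auto
  thus ?thesis
    using S(4) by (simp add: coeff_x flip: sum_distrib_right)
qed

lemma mem_component_iff: "j \<in> component I \<longleftrightarrow> (\<exists>x\<in>face I. coeff j x \<noteq> coeff j lam)"
  using component_coeff_lt face_coeff_eq_outside_component by force

lemma face_eq_iff_component_eq: "face I = face J \<longleftrightarrow> component I = component J"
proof
  assume eq: "face I = face J"
  show "component I = component J"
    unfolding set_eq_iff mem_component_iff eq by simp
next
  have face_subset: "face I \<subseteq> face J" if "component I = component J" for I J
  proof
    fix x assume x: "x \<in> face I"
    have "coeff i x = coeff i lam" if "i \<in> J" for i
    proof (rule face_coeff_eq_outside_component[OF x])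
      show "i \<notin> component I"
        using that lam_component_subset \<open>component I = component J\<close> unfolding compl0_def by blast
    qed
    thus "x \<in> face J"
      using x by (simp add: mem_face_iff)
  qed
  assume "component I = component J"
  thus "face I = face J"
    using face_subset[of I J] face_subset[of J I] by blast
qed

end

theorem corollary4p4:
  fixes \<alpha> :: "nat \<Rightarrow> 'a::euclidean_space" and n :: nat and lam :: 'a and I J :: "nat set"
  assumes "simple_system \<alpha> n"
    and "dominant_integral \<alpha> n lam"
    and "I \<subseteq> {1..n}" and "J \<subseteq> {1..n}"
  shows "(weight_face \<alpha> n lam I = weight_face \<alpha> n lam J \<longleftrightarrow> compl0 \<alpha> n lam I = compl0 \<alpha> n lam J)
       \<and> (compl0 \<alpha> n lam I = compl0 \<alpha> n lam J \<longleftrightarrow> \<alpha> ` compl0 \<alpha> n lam I = \<alpha> ` compl0 \<alpha> n lam J)"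
proof -
  interpret dominant_weight \<alpha> n lam
    by unfold_locales (fact assms(1), fact assms(2))
  have "compl0 \<alpha> n lam K \<subseteq> {1..n}" for K
    unfolding compl0_def using lam_component_subset by blast
  thus ?thesis
    using face_eq_iff_component_eq inj_on_image_eq_iff[OF inj_on_alpha] by simp
qed

end
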